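(* Let $\mathbf D$ be a set of tilings containing both $\emptyset$ and $\Lambda$ (a normal super-domain). Then $\mathbf D$ is a clique (its elements are pairwise compatible) if and only if $\mathbf D$ is a Condorcet super-domain.
   Context: Fix an integer $n\ge 3$ and write $[n]=\{1,\dots,n\}$. Let $\Lambda$ be the set of 3-element subsets of $[n]$; a triple $\{i,j,k\}$ with $i<j<k$ is written $ijk$. For a 4-element subset $F=\{i<j<k<l\}$ of $[n]$, the stick of $F$ is the sequence $(ijk,\ ijl,\ ikl,\ jkl)$. A tiling (the inversion set of a rhombus tiling of the zonogon $Z(n;2)$) is a subset $T\subseteq\Lambda$ such that for every 4-element $F\subseteq[n]$, $T\cap\mathrm{stick}(F)$ is an initial segment or a final segment of the stick (empty set and whole stick allowed). Two tilings $T,T'$ are compatible if both $T\cap T'$ and $T\cup T'$ are tilings. For a finite set $V$ of odd cardinality and tilings $(T_v)_{v\in V}$, $sm((T_v)_{v\in V})$ is the set of triples lying in $T_v$ for more than $|V|/2$ indices $v$. A set $\mathbf D$ of tilings is a Condorcet super-domain if for every finite $V$ of odd cardinality and every family $(T_v)_{v\in V}$ with all $T_v\in\mathbf D$, $sm((T_v)_{v\in V})$ is a tiling. *)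

theory Defs
  imports Main
begin

definition Lambda :: "nat \<Rightarrow> nat set set" where
  "Lambda n = {t. t \<subseteq> {1..n} \<and> card t = 3}"

definition stick :: "nat \<Rightarrow> nat \<Rightarrow> nat \<Rightarrow> nat \<Rightarrow> nat set list" where
  "stick i j k l = [{i,j,k}, {i,j,l}, {i,k,l}, {j,k,l}]"

definition is_tiling :: "nat \<Rightarrow> nat set set \<Rightarrow> bool" where
  "is_tiling n T \<longleftrightarrow> T \<subseteq> Lambda n \<and>
     (\<forall>i j k l. 1 \<le> i \<and> i < j \<and> j < k \<and> k < l \<and> l \<le> n \<longrightarrow>
        (\<exists>m \<le> 4. T \<inter> set (stick i j k l) = set (take m (stick i j k l))
               \<or> T \<inter> set (stick i j k l) = set (drop m (stick i j k l))))"

definition compatible :: "nat \<Rightarrow> nat set set \<Rightarrow> nat set set \<Rightarrow> bool" where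
  "compatible n T T' \<longleftrightarrow> is_tiling n (T \<inter> T') \<and> is_tiling n (T \<union> T')"

definition is_clique :: "nat \<Rightarrow> nat set set set \<Rightarrow> bool" where
  "is_clique n D \<longleftrightarrow> (\<forall>T\<in>D. \<forall>T'\<in>D. compatible n T T')"

definition sm :: "nat \<Rightarrow> 'v set \<Rightarrow> ('v \<Rightarrow> nat set set) \<Rightarrow> nat set set" where
  "sm n V T = {t \<in> Lambda n. 2 * card {v \<in> V. t \<in> T v} > card V}"

text \<open>Index sets V are taken as finite sets of naturals (any finite set is in bijection with one).\<close>
definition condorcet_super_domain :: "nat \<Rightarrow> nat set set set \<Rightarrow> bool" where
  "condorcet_super_domain n D \<longleftrightarrow> (\<forall>D' \<in> D. is_tiling n D') \<and>
     (\<forall>(V::nat set) T. finite V \<and> odd (card V) \<and> (\<forall>v\<in>V. T v \<in> D) \<longrightarrow> is_tiling n (sm n V T))"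

end

theory Submission
  imports Defs
begin

text \<open>
  A set of triples meets a stick in an initial or a final segment iff its membership word along
  the stick has no subword 101 or 010. If the majority word had 101 at positions p < q < r, then
  some voter contains the p-th triple but not the q-th one, and some voter contains the r-th triple
  but not the q-th one; their union exhibits 101, so these two voters are not compatible. Dually,
  a majority pattern 010 is exhibited by the intersection of two voters. Conversely, the majority
  of the three voters T, T' and the empty set (resp. \<Lambda>) is T \<inter> T' (resp. T \<union> T').
\<close>

definition alternation_free :: "bool list \<Rightarrow> bool" where
  "alternation_free bs \<longleftrightarrow>
     (\<forall>i j k. i < j \<longrightarrow> j < k \<longrightarrow> k < length bs \<longrightarrow> bs ! i = bs ! k \<longrightarrow> bs ! j = bs ! i)"

lemma alternation_free_iff_threshold:
  "alternation_free bs \<longleftrightarrow>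
     (\<exists>m \<le> length bs. (\<forall>i < length bs. bs ! i \<longleftrightarrow> i < m) \<or> (\<forall>i < length bs. bs ! i \<longleftrightarrow> m \<le> i))"
proof
  assume free: "alternation_free bs"
  have "\<exists>m \<le> length bs. \<forall>i < length bs. bs ! i = bs ! 0 \<longleftrightarrow> i < m"
  proof (cases "\<exists>m. m < length bs \<and> bs ! m \<noteq> bs ! 0")
    case True
    define m where "m = (LEAST m. m < length bs \<and> bs ! m \<noteq> bs ! 0)"
    have m: "m < length bs" "bs ! m \<noteq> bs ! 0"
      using LeastI_ex[OF True] unfolding m_def by auto
    have before: "bs ! i = bs ! 0" if "i < m" for i
      using not_less_Least[OF that[unfolded m_def]] that m(1) by simp
    from m(2) have "0 < m"
      by (cases m) simp_all
    have after: "bs ! i \<noteq> bs ! 0" if "m \<le> i" "i < length bs" for i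
    proof (cases "i = m")
      case False
      with that have "m < i" by simp
      with free \<open>0 < m\<close> m(2) that(2) show ?thesis
        unfolding alternation_free_def by blast
    qed (use m in simp)
    show ?thesis
    proof (intro exI conjI allI impI)
      fix i assume "i < length bs"
      with before after show "bs ! i = bs ! 0 \<longleftrightarrow> i < m"
        by (meson not_le)
    qed (use m in simp)
  qed auto
  then show "\<exists>m \<le> length bs. (\<forall>i < length bs. bs ! i \<longleftrightarrow> i < m) \<or> (\<forall>i < length bs. bs ! i \<longleftrightarrow> m \<le> i)"
    by (cases "bs ! 0") (auto simp: not_less[symmetric])
next
  assume "\<exists>m \<le> length bs. (\<forall>i < length bs. bs ! i \<longleftrightarrow> i < m) \<or> (\<forall>i < length bs. bs ! i \<longleftrightarrow> m \<le> i)"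
  then obtain m where threshold:
    "(\<forall>i < length bs. bs ! i \<longleftrightarrow> i < m) \<or> (\<forall>i < length bs. bs ! i \<longleftrightarrow> m \<le> i)"
    by blast
  show "alternation_free bs"
    unfolding alternation_free_def
  proof (intro allI impI)
    fix i j k assume "i < j" "j < k" "k < length bs" "bs ! i = bs ! k"
    with threshold show "bs ! j = bs ! i"
      by (elim disjE) (simp_all, linarith+)
  qed
qed

lemma alternation_free_mapD:
  assumes "alternation_free (map P xs)" "i < j" "j < k" "k < length xs" "P (xs ! i) = P (xs ! k)"
  shows "P (xs ! j) = P (xs ! i)"
proof -
  have "i < length xs" "j < length xs" "k < length (map P xs)"
    using assms(2-4) by simp_all
  with assms(1-3) have "map P xs ! i = map P xs ! k \<longrightarrow> map P xs ! j = map P xs ! i"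
    unfolding alternation_free_def by blast
  with assms(5) \<open>i < length xs\<close> \<open>j < length xs\<close> \<open>k < length (map P xs)\<close> show ?thesis
    by simp
qed

lemma alternation_free_mapI:
  assumes "\<And>i j k. i < j \<Longrightarrow> j < k \<Longrightarrow> k < length xs \<Longrightarrow> P (xs ! i) = P (xs ! k) \<Longrightarrow> P (xs ! j) = P (xs ! i)"
  shows "alternation_free (map P xs)"
  unfolding alternation_free_def using assms by auto

lemma nth_in_set_take_iff:
  assumes "distinct xs" "i < length xs"
  shows "xs ! i \<in> set (take m xs) \<longleftrightarrow> i < m"
  using assms by (auto simp: in_set_conv_nth nth_eq_iff_index_eq)

lemma nth_in_set_drop_iff:
  assumes "distinct xs" "i < length xs"
  shows "xs ! i \<in> set (drop m xs) \<longleftrightarrow> m \<le> i"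
proof
  assume "m \<le> i"
  with assms show "xs ! i \<in> set (drop m xs)"
    by (auto simp: in_set_conv_nth intro!: exI[of _ "i - m"])
qed (use assms in \<open>auto simp: in_set_conv_nth nth_eq_iff_index_eq\<close>)

lemma Int_set_eq_iff_nth:
  assumes "X \<subseteq> set xs"
  shows "S \<inter> set xs = X \<longleftrightarrow> (\<forall>i < length xs. xs ! i \<in> S \<longleftrightarrow> xs ! i \<in> X)"
proof -
  have "S \<inter> set xs = X \<longleftrightarrow> (\<forall>x \<in> set xs. x \<in> S \<longleftrightarrow> x \<in> X)"
    using assms by blast
  then show ?thesis
    by (simp add: all_set_conv_all_nth)
qed

lemma Int_set_segment_iff_alternation_free:
  assumes "distinct xs"
  shows "(\<exists>m \<le> length xs. S \<inter> set xs = set (take m xs) \<or> S \<inter> set xs = set (drop m xs))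
     \<longleftrightarrow> alternation_free (map (\<lambda>x. x \<in> S) xs)"
proof -
  have "S \<inter> set xs = set (take m xs) \<longleftrightarrow> (\<forall>i < length xs. xs ! i \<in> S \<longleftrightarrow> i < m)"
    and "S \<inter> set xs = set (drop m xs) \<longleftrightarrow> (\<forall>i < length xs. xs ! i \<in> S \<longleftrightarrow> m \<le> i)" for m
    using assms by (simp_all add: Int_set_eq_iff_nth set_take_subset set_drop_subset
        nth_in_set_take_iff nth_in_set_drop_iff)
  then show ?thesis
    by (simp add: alternation_free_iff_threshold)
qed

lemma distinct_stick: "i < j \<Longrightarrow> j < k \<Longrightarrow> k < l \<Longrightarrow> distinct (stick i j k l)"
  unfolding stick_def by (auto simp: insert_eq_iff doubleton_eq_iff)

lemma length_stick [simp]: "length (stick i j k l) = 4"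
  by (simp add: stick_def)

lemma set_stick_subset_Lambda:
  "1 \<le> i \<Longrightarrow> i < j \<Longrightarrow> j < k \<Longrightarrow> k < l \<Longrightarrow> l \<le> n \<Longrightarrow> set (stick i j k l) \<subseteq> Lambda n"
  unfolding stick_def Lambda_def by auto

lemma is_tiling_iff_alternation_free:
  "is_tiling n S \<longleftrightarrow> S \<subseteq> Lambda n \<and>
     (\<forall>i j k l. 1 \<le> i \<and> i < j \<and> j < k \<and> k < l \<and> l \<le> n \<longrightarrow>
        alternation_free (map (\<lambda>t. t \<in> S) (stick i j k l)))"
  unfolding is_tiling_def
  using Int_set_segment_iff_alternation_free[OF distinct_stick] by (simp cong: conj_cong)

definition majority :: "'v set \<Rightarrow> ('v \<Rightarrow> 'a set) \<Rightarrow> 'a set" where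
  "majority V T = {t. card V < 2 * card {v \<in> V. t \<in> T v}}"

lemma sm_eq_Lambda_Int_majority: "sm n V T = Lambda n \<inter> majority V T"
  by (auto simp: sm_def majority_def)

lemma majority_separating_voter:
  assumes "finite V" "x \<in> majority V T" "y \<notin> majority V T"
  obtains v where "v \<in> V" "x \<in> T v" "y \<notin> T v"
proof -
  have "\<not> {v \<in> V. x \<in> T v} \<subseteq> {v \<in> V. y \<in> T v}"
    using assms card_mono[of "{v \<in> V. y \<in> T v}" "{v \<in> V. x \<in> T v}"]
    unfolding majority_def by fastforce
  then show ?thesis
    using that by blast
qed

lemma alternation_free_majority:
  assumes "finite V"
    and union: "\<And>v w. v \<in> V \<Longrightarrow> w \<in> V \<Longrightarrow> alternation_free (map (\<lambda>t. t \<in> T v \<union> T w) ts)"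
    and inter: "\<And>v w. v \<in> V \<Longrightarrow> w \<in> V \<Longrightarrow> alternation_free (map (\<lambda>t. t \<in> T v \<inter> T w) ts)"
  shows "alternation_free (map (\<lambda>t. t \<in> majority V T) ts)"
proof (rule alternation_free_mapI, rule ccontr)
  fix i j k assume ijk: "i < j" "j < k" "k < length ts"
    and ends: "(ts ! i \<in> majority V T) = (ts ! k \<in> majority V T)"
    and middle: "(ts ! j \<in> majority V T) \<noteq> (ts ! i \<in> majority V T)"
  show False
  proof (cases "ts ! i \<in> majority V T")
    case True
    obtain v where v: "v \<in> V" "ts ! i \<in> T v" "ts ! j \<notin> T v"
      using majority_separating_voter[OF \<open>finite V\<close>, of "ts ! i" T "ts ! j"] True middle by blast
    obtain w where w: "w \<in> V" "ts ! k \<in> T w" "ts ! j \<notin> T w"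
      using majority_separating_voter[OF \<open>finite V\<close>, of "ts ! k" T "ts ! j"] True ends middle by blast
    show False
      using alternation_free_mapD[OF union[OF v(1) w(1)] ijk] v w by blast
  next
    case False
    obtain v where v: "v \<in> V" "ts ! j \<in> T v" "ts ! i \<notin> T v"
      using majority_separating_voter[OF \<open>finite V\<close>, of "ts ! j" T "ts ! i"] False middle by blast
    obtain w where w: "w \<in> V" "ts ! j \<in> T w" "ts ! k \<notin> T w"
      using majority_separating_voter[OF \<open>finite V\<close>, of "ts ! j" T "ts ! k"] False ends middle by blast
    show False
      using alternation_free_mapD[OF inter[OF v(1) w(1)] ijk] v w by blast
  qed
qed

lemma is_tiling_sm:
  assumes "finite V" and compatible: "\<And>v w. v \<in> V \<Longrightarrow> w \<in> V \<Longrightarrow> compatible n (T v) (T w)"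
  shows "is_tiling n (sm n V T)"
  unfolding is_tiling_iff_alternation_free
proof (intro conjI allI impI)
  show "sm n V T \<subseteq> Lambda n"
    by (simp add: sm_eq_Lambda_Int_majority)
  fix i j k l assume ijkl: "1 \<le> i \<and> i < j \<and> j < k \<and> k < l \<and> l \<le> n"
  have "map (\<lambda>t. t \<in> sm n V T) (stick i j k l) = map (\<lambda>t. t \<in> majority V T) (stick i j k l)"
    using set_stick_subset_Lambda[of i j k l n] ijkl by (auto simp: sm_eq_Lambda_Int_majority)
  also have "alternation_free \<dots>"
    using \<open>finite V\<close> compatible ijkl
    by (intro alternation_free_majority) (auto simp: compatible_def is_tiling_iff_alternation_free)
  finally show "alternation_free (map (\<lambda>t. t \<in> sm n V T) (stick i j k l))" .
qed

lemma majority_three_voters: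
  assumes "a \<noteq> b" "a \<noteq> c" "b \<noteq> c"
  shows "majority {a, b, c} T = T a \<inter> T b \<union> T a \<inter> T c \<union> T b \<inter> T c"
proof -
  have "{v \<in> {a, b, c}. t \<in> T v} =
      (if t \<in> T a then {a} else {}) \<union> (if t \<in> T b then {b} else {}) \<union> (if t \<in> T c then {c} else {})" for t
    by auto
  with assms show ?thesis
    unfolding majority_def by auto
qed

lemma clique_imp_condorcet_super_domain:
  assumes "is_clique n D" "\<forall>T \<in> D. is_tiling n T"
  shows "condorcet_super_domain n D"
  unfolding condorcet_super_domain_def
proof (intro conjI allI impI)
  fix V :: "nat set" and T
  assume "finite V \<and> odd (card V) \<and> (\<forall>v \<in> V. T v \<in> D)"
  with \<open>is_clique n D\<close> show "is_tiling n (sm n V T)"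
    unfolding is_clique_def by (intro is_tiling_sm) auto
qed (use assms in simp)

lemma condorcet_super_domain_imp_clique:
  assumes condorcet: "condorcet_super_domain n D" and "{} \<in> D" "Lambda n \<in> D"
  shows "is_clique n D"
  unfolding is_clique_def compatible_def
proof (intro ballI conjI)
  fix T T' assume "T \<in> D" "T' \<in> D"
  then have "T \<subseteq> Lambda n" "T' \<subseteq> Lambda n"
    using condorcet unfolding condorcet_super_domain_def is_tiling_def by auto
  have sm_three: "sm n {0, 1, 2} (nth [T, T', X]) = Lambda n \<inter> (T \<inter> T' \<union> T \<inter> X \<union> T' \<inter> X)" for X
    by (simp add: sm_eq_Lambda_Int_majority majority_three_voters numeral_eq_Suc)
  have tiling: "is_tiling n (sm n {0, 1, 2} (nth [T, T', X]))" if "X \<in> D" for X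
  proof -
    have "\<forall>v \<in> {0, 1, 2}. [T, T', X] ! v \<in> D"
      using \<open>T \<in> D\<close> \<open>T' \<in> D\<close> that by (simp add: numeral_eq_Suc)
    then show ?thesis
      using condorcet unfolding condorcet_super_domain_def by simp
  qed
  have "sm n {0, 1, 2} (nth [T, T', {}]) = T \<inter> T'"
    and "sm n {0, 1, 2} (nth [T, T', Lambda n]) = T \<union> T'"
    using \<open>T \<subseteq> Lambda n\<close> \<open>T' \<subseteq> Lambda n\<close> unfolding sm_three by auto
  with tiling[OF \<open>{} \<in> D\<close>] tiling[OF \<open>Lambda n \<in> D\<close>]
  show "is_tiling n (T \<inter> T')" "is_tiling n (T \<union> T')"
    by simp_all
qed

theorem proposition2:
  fixes n :: nat and D :: "nat set set set"
  assumes "n \<ge> 3"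
    and "\<forall>T\<in>D. is_tiling n T"
    and "{} \<in> D" and "Lambda n \<in> D"
  shows "is_clique n D \<longleftrightarrow> condorcet_super_domain n D"
  using clique_imp_condorcet_super_domain[OF _ assms(2)]
    condorcet_super_domain_imp_clique[OF _ assms(3,4)] by blast

end
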